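(* Let $\mathbb P=\mathrm{Cauchy}(l_1,s_1)$, $\mathbb Q=\mathrm{Cauchy}(l_2,s_2)$ with $s_1,s_2>0$ and $\delta=l_1-l_2$. Then \[ \rho_{1/2}(\mathbb P,\mathbb Q)=\int_{\mathbb R}\sqrt{p_{l_1,s_1}(x)p_{l_2,s_2}(x)}\,\mathrm dx=\frac{4\sqrt{s_1s_2}}{\pi\sqrt{(s_1+s_2)^2+\delta^2}}\,K\!\left(\frac{(s_1-s_2)^2+\delta^2}{(s_1+s_2)^2+\delta^2}\right), \] and $D_C(\mathbb P,\mathbb Q)=D_{B,1/2}(\mathbb P,\mathbb Q)=-\ln\rho_{1/2}(\mathbb P,\mathbb Q)$.
   Context: Cauchy density $p_{l,s}(x)=\frac{s}{\pi(s^2+(x-l)^2)}$ on $\mathbb R$. $K(m)=\int_0^{\pi/2}(1-m\sin^2u)^{-1/2}\,\mathrm du$ for $m\in[0,1)$ is the complete elliptic integral of the first kind. Unweighted quantities: $\rho_\alpha(\mathbb P,\mathbb Q)=\int_{\mathbb R}p_{l_1,s_1}^\alpha p_{l_2,s_2}^{1-\alpha}\,\mathrm dx$, $D_{B,\alpha}=-\ln\rho_\alpha$, $D_C(\mathbb P,\mathbb Q)=\max_{\alpha\in[0,1]}D_{B,\alpha}(\mathbb P,\mathbb Q)$. *)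

theory Defs
  imports "HOL-Analysis.Analysis"
begin

definition cauchy_pdf :: "real \<Rightarrow> real \<Rightarrow> real \<Rightarrow> real" where
  "cauchy_pdf l s x = s / (pi * (s\<^sup>2 + (x - l)\<^sup>2))"

definition ellipK :: "real \<Rightarrow> real" where
  "ellipK m = (LBINT u=0..pi/2. 1 / sqrt (1 - m * (sin u)\<^sup>2))"

definition rho_cauchy :: "real \<Rightarrow> real \<Rightarrow> real \<Rightarrow> real \<Rightarrow> real \<Rightarrow> real" where
  "rho_cauchy \<alpha> l1 s1 l2 s2 =
     (LINT x|lborel. cauchy_pdf l1 s1 x powr \<alpha> * cauchy_pdf l2 s2 x powr (1 - \<alpha>))"

definition DB_cauchy :: "real \<Rightarrow> real \<Rightarrow> real \<Rightarrow> real \<Rightarrow> real \<Rightarrow> real" where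
  "DB_cauchy \<alpha> l1 s1 l2 s2 = - ln (rho_cauchy \<alpha> l1 s1 l2 s2)"

text \<open>Chernoff information: maximum over alpha in [0,1] (rendered as a supremum).\<close>
definition DC_cauchy :: "real \<Rightarrow> real \<Rightarrow> real \<Rightarrow> real \<Rightarrow> real" where
  "DC_cauchy l1 s1 l2 s2 = (SUP \<alpha>\<in>{0..1}. DB_cauchy \<alpha> l1 s1 l2 s2)"

end

theory Submission
  imports Defs
begin

(* Identify Cauchy(l, s) with the point z = l + i s of the upper half-plane. The real Moebius
   maps x + a, -x and -1/x push Cauchy densities to Cauchy densities, acting on z by the same
   Moebius maps; hence they preserve every rho_alpha, and they also preserve
   m = |z1 - z2|^2 / |z1 - conj z2|^2 = ((s1 - s2)^2 + delta^2) / ((s1 + s2)^2 + delta^2).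
   A translation followed by x -> -1/x equalises the two scales, and a further translation
   centres the pair, so it suffices to treat Cauchy(-l, s) against Cauchy(l, s). There the
   substitution x = R tan(u/2), R^2 = l^2 + s^2, turns sqrt(p q) dx into
   s / (2 pi R) * du / sqrt(1 - m sin^2 u) on a full period, which integrates to 4 K(m).
   In the centred form the reflection x -> -x swaps the densities, hence
   rho_alpha = rho_(1-alpha); since sqrt(p q) is the geometric mean of the integrands of
   rho_alpha and rho_(1-alpha), AM-GM gives rho_(1/2) <= rho_alpha, so alpha = 1/2 maximises
   the Bhattacharyya distance. *)

section \<open>Integrals of nonnegative functions and substitution\<close>

lemma has_integral_nonneg_lborel:
  fixes f :: "real \<Rightarrow> real"
  assumes [measurable]: "f \<in> borel_measurable borel" and nonneg: "\<And>x. 0 \<le> f x"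
    and I: "(f has_integral I) UNIV"
  shows "integrable lborel f" and "integral\<^sup>L lborel f = I"
proof -
  have nn: "(\<integral>\<^sup>+x. ennreal (f x) \<partial>lborel) = ennreal I"
    using nn_integral_has_integral_lborel[OF assms] by simp
  show "integrable lborel f"
    by (rule integrableI_nn_integral_finite[OF _ _ nn]) (auto simp: nonneg)
  have "I \<ge> 0" using has_integral_nonneg[OF I] nonneg by auto
  then show "integral\<^sup>L lborel f = I"
    using integral_eq_nn_integral[of f lborel] nn nonneg by simp
qed

lemma has_integral_substitution_nonneg:
  fixes f g g' :: "real \<Rightarrow> real"
  assumes "S \<in> sets lebesgue"
    and "\<And>u. u \<in> S \<Longrightarrow> (g has_field_derivative g' u) (at u within S)"
    and "inj_on g S" and "\<And>u. u \<in> S \<Longrightarrow> 0 \<le> g' u" and "\<And>x. x \<in> g ` S \<Longrightarrow> 0 \<le> f x"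
    and I: "((\<lambda>u. g' u * f (g u)) has_integral I) S"
  shows "(f has_integral I) (g ` S)"
proof -
  have "(\<lambda>u. \<bar>g' u\<bar> * f (g u)) absolutely_integrable_on S \<and> integral S (\<lambda>u. \<bar>g' u\<bar> * f (g u)) = I"
  proof -
    have eq: "\<bar>g' u\<bar> * f (g u) = g' u * f (g u)" if "u \<in> S" for u
      using assms(4) that by simp
    have "(\<lambda>u. g' u * f (g u)) absolutely_integrable_on S"
      using I assms(4,5) by (subst absolutely_integrable_on_iff_nonneg) auto
    then have "(\<lambda>u. \<bar>g' u\<bar> * f (g u)) absolutely_integrable_on S"
      by (rule absolutely_integrable_spike[of _ _ "{}"]) (simp_all add: eq)
    moreover have "integral S (\<lambda>u. \<bar>g' u\<bar> * f (g u)) = integral S (\<lambda>u. g' u * f (g u))"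
      by (rule integral_cong) (simp add: eq)
    ultimately show ?thesis using I by (simp add: integral_unique)
  qed
  then have "f absolutely_integrable_on g ` S \<and> integral (g ` S) f = I"
    using has_absolute_integral_change_of_variables_1' assms(1-3) by blast
  then show ?thesis by (auto simp: absolutely_integrable_on_def)
qed

lemma has_integral_tan_substitution:
  fixes f :: "real \<Rightarrow> real"
  assumes "R > 0" and "\<And>x. 0 \<le> f x"
    and I: "((\<lambda>u. R * (1 + (tan (u/2))\<^sup>2) / 2 * f (c + R * tan (u/2))) has_integral I) {-pi<..<pi}"
  shows "(f has_integral I) UNIV"
proof -
  define g where "g u = c + R * tan (u/2)" for u
  have "(g has_field_derivative R * (1 + (tan (u/2))\<^sup>2) / 2) (at u within {-pi<..<pi})"
    if "u \<in> {-pi<..<pi}" for u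
  proof -
    have "cos (u/2) \<noteq> 0" using that by (intro cos_gt_zero_pi[THEN less_imp_neq, symmetric]) auto
    then show ?thesis unfolding g_def
      by (auto intro!: derivative_eq_intros DERIV_tan[THEN DERIV_chain2] simp: tan_sec power_inverse)
  qed
  moreover have "inj_on g {-pi<..<pi}"
  proof
    fix u v assume u: "u \<in> {-pi<..<pi}" and v: "v \<in> {-pi<..<pi}" and "g u = g v"
    then have "arctan (tan (u/2)) = arctan (tan (v/2))" using \<open>R > 0\<close> by (simp add: g_def)
    then show "u = v" using u v by (subst (asm) (1 2) arctan_tan) auto
  qed
  moreover have "g ` {-pi<..<pi} = UNIV"
  proof -
    have "x \<in> g ` {-pi<..<pi}" for x
    proof
      show "x = g (2 * arctan ((x - c) / R))" using \<open>R > 0\<close> by (simp add: g_def tan_arctan)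
      show "2 * arctan ((x - c) / R) \<in> {-pi<..<pi}" using arctan_bounded[of "(x - c) / R"] by auto
    qed
    then show ?thesis by blast
  qed
  moreover have "((\<lambda>u. R * (1 + (tan (u/2))\<^sup>2) / 2 * f (g u)) has_integral I) {-pi<..<pi}"
    using I by (simp add: g_def)
  ultimately show ?thesis
    using has_integral_substitution_nonneg[of "{-pi<..<pi}" g "\<lambda>u. R * (1 + (tan (u/2))\<^sup>2) / 2" f I]
      assms by (simp add: add_pos_nonneg less_imp_le)
qed

lemma has_integral_reciprocal_substitution:
  fixes f :: "real \<Rightarrow> real"
  assumes "\<And>x. 0 \<le> f x" and I: "((\<lambda>y. f (-1/y) / y\<^sup>2) has_integral I) UNIV"
  shows "(f has_integral I) UNIV"
proof -
  define g :: "real \<Rightarrow> real" where "g y = -1/y" for y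
  have spike: "(h has_integral J) (-{0}) \<longleftrightarrow> (h has_integral J) UNIV" for h :: "real \<Rightarrow> real" and J
    by (rule has_integral_spike_set_eq) (auto intro: negligible_subset[of "{0}"])
  have "(g has_field_derivative 1 / y\<^sup>2) (at y within -{0})" if "y \<in> -{0}" for y
    using that unfolding g_def by (auto intro!: derivative_eq_intros simp: power2_eq_square)
  moreover have "inj_on g (-{0})" by (rule inj_onI) (auto simp: g_def)
  moreover have "y \<in> g ` (-{0})" if "y \<noteq> 0" for y
  proof
    show "y = g (-1/y)" using that by (simp add: g_def)
  qed (use that in auto)
  then have "g ` (-{0}) = -{0}" by (auto simp: g_def)
  moreover have "((\<lambda>y. 1 / y\<^sup>2 * f (g y)) has_integral I) (-{0})"
    using I spike unfolding g_def by simp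
  ultimately have "(f has_integral I) (-{0})"
    using has_integral_substitution_nonneg[of "-{0}" g "\<lambda>y. 1 / y\<^sup>2" f I] assms by auto
  then show ?thesis using spike by blast
qed

section \<open>The complete elliptic integral of the first kind\<close>

definition ellipK_integrand :: "real \<Rightarrow> real \<Rightarrow> real" where
  "ellipK_integrand m u = 1 / sqrt (1 - m * (sin u)\<^sup>2)"

lemma ellipK_radicand_pos:
  fixes m :: real
  assumes "m < 1"
  shows "1 - m * (sin u)\<^sup>2 > 0"
proof (cases "m \<le> 0")
  case True
  then have "m * (sin u)\<^sup>2 \<le> 0" by (simp add: mult_nonpos_nonneg)
  then show ?thesis by simp
next
  case False
  have "(sin u)\<^sup>2 \<le> 1" by (simp add: abs_square_le_1)
  then have "m * (sin u)\<^sup>2 \<le> m" using False by (simp add: mult_left_le)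
  then show ?thesis using assms by simp
qed

lemma continuous_on_ellipK_integrand: "m < 1 \<Longrightarrow> continuous_on A (ellipK_integrand m)"
  unfolding ellipK_integrand_def
  by (intro continuous_intros) (use ellipK_radicand_pos in \<open>auto simp: less_imp_neq[symmetric]\<close>)

lemma has_integral_ellipK:
  assumes "m < 1"
  shows "(ellipK_integrand m has_integral ellipK m) {0..pi/2}"
proof -
  have "ellipK m = integral {0..pi/2} (ellipK_integrand m)"
    unfolding ellipK_def ellipK_integrand_def[symmetric] zero_ereal_def
    by (rule interval_integral_eq_integral)
      (auto intro!: borel_integrable_atLeastAtMost' continuous_on_ellipK_integrand assms)
  then show ?thesis
    using integrable_continuous_interval[OF continuous_on_ellipK_integrand[OF assms]]
    by (simp add: has_integral_integral)
qed

lemma has_integral_ellipK_full_period: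
  assumes "m < 1"
  shows "(ellipK_integrand m has_integral 4 * ellipK m) {-pi..pi}"
proof -
  note K = has_integral_ellipK[OF assms]
  have reflected: "((\<lambda>u. ellipK_integrand m (-u)) has_integral ellipK m) {-(pi/2)..-0}"
    using K by (subst has_integral_reflect_real)
  then have Q4: "(ellipK_integrand m has_integral ellipK m) {-(pi/2)..0}"
    by (simp add: ellipK_integrand_def[abs_def])
  have Q2: "(ellipK_integrand m has_integral ellipK m) {pi/2..pi}"
    using has_integral_shift_real_ivl[OF reflected, of "-pi"] by (simp add: ellipK_integrand_def[abs_def])
  have Q3: "(ellipK_integrand m has_integral ellipK m) {-pi..-(pi/2)}"
    using has_integral_shift_real_ivl[OF K, of pi] by (simp add: ellipK_integrand_def[abs_def])
  have "(ellipK_integrand m has_integral ellipK m + ellipK m) {-pi..0}"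
    by (rule has_integral_combine[OF _ _ Q3 Q4]) auto
  moreover have "(ellipK_integrand m has_integral ellipK m + ellipK m) {0..pi}"
    by (rule has_integral_combine[OF _ _ K Q2]) auto
  ultimately have "(ellipK_integrand m has_integral (ellipK m + ellipK m) + (ellipK m + ellipK m)) {-pi..pi}"
    by (rule has_integral_combine[rotated 2]) auto
  then show ?thesis by simp
qed

lemma ellipK_ge_pi_half:
  assumes "0 \<le> m" and "m < 1"
  shows "ellipK m \<ge> pi/2"
proof -
  have "1 \<le> ellipK_integrand m u" for u
  proof -
    have "sqrt (1 - m * (sin u)\<^sup>2) \<le> 1" using assms by simp
    then show ?thesis
      using ellipK_radicand_pos[OF assms(2), of u] by (simp add: ellipK_integrand_def)
  qed
  then show ?thesis
    using has_integral_le[OF has_integral_const_real[of 1 0 "pi/2"] has_integral_ellipK[OF assms(2)]]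
    by simp
qed

section \<open>Cauchy densities under translation, reflection and inversion\<close>

lemma cauchy_pdf_pos: "s > 0 \<Longrightarrow> cauchy_pdf l s x > 0"
  unfolding cauchy_pdf_def by (simp add: add_pos_nonneg)

lemma borel_measurable_cauchy_pdf [measurable]: "cauchy_pdf l s \<in> borel_measurable borel"
  unfolding cauchy_pdf_def by measurable

lemma cauchy_pdf_translate: "cauchy_pdf l s (a + x) = cauchy_pdf (l - a) s x"
  unfolding cauchy_pdf_def by (simp add: algebra_simps)

lemma cauchy_pdf_reflect: "cauchy_pdf l s (- x) = cauchy_pdf (- l) s x"
  unfolding cauchy_pdf_def by (simp add: power2_commute add.commute)

lemma cauchy_pdf_reciprocal:
  assumes "s > 0" and "y \<noteq> 0"
  shows "cauchy_pdf l s (-1/y) / y\<^sup>2 = cauchy_pdf (-l/(l\<^sup>2+s\<^sup>2)) (s/(l\<^sup>2+s\<^sup>2)) y"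
proof -
  define r where "r = l\<^sup>2 + s\<^sup>2"
  define Q where "Q = r * y\<^sup>2 + 2 * l * y + 1"
  have "r > 0" unfolding r_def using assms by (simp add: add_nonneg_pos)
  have "(s\<^sup>2 + (-1/y - l)\<^sup>2) * y\<^sup>2 = Q"
    using assms unfolding Q_def r_def by (simp add: field_simps power2_eq_square)
  then have lhs: "cauchy_pdf l s (-1/y) / y\<^sup>2 = s / (pi * Q)"
    unfolding cauchy_pdf_def by (simp add: mult.assoc)
  have "s\<^sup>2 + (r * y + l)\<^sup>2 = r * Q"
    unfolding Q_def r_def by (simp add: power2_eq_square algebra_simps)
  then have "(s/r)\<^sup>2 + (y - -l/r)\<^sup>2 = Q / r"
    using \<open>r > 0\<close> by (simp add: field_simps power2_eq_square)
  then have "cauchy_pdf (-l/r) (s/r) y = s / (pi * Q)"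
    unfolding cauchy_pdf_def using \<open>r > 0\<close> by simp
  with lhs show ?thesis unfolding r_def by simp
qed

lemma has_integral_cauchy_pdf:
  assumes "s > 0"
  shows "(cauchy_pdf l s has_integral 1) UNIV"
proof (rule has_integral_tan_substitution[OF assms, of _ l])
  show "0 \<le> cauchy_pdf l s x" for x using cauchy_pdf_pos[OF assms] less_imp_le by blast
  have "s * (1 + t\<^sup>2) / 2 * cauchy_pdf l s (l + s * t) = 1 / (2*pi)" for t
  proof -
    have "s\<^sup>2 + (l + s * t - l)\<^sup>2 = s\<^sup>2 * (1 + t\<^sup>2)" by (simp add: power_mult_distrib algebra_simps)
    moreover have "1 + t\<^sup>2 > 0" by (simp add: add_pos_nonneg)
    ultimately show ?thesis using assms by (simp add: cauchy_pdf_def power2_eq_square)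
  qed
  moreover have "((\<lambda>u. 1 / (2*pi)) has_integral 1) {-pi<..<pi}"
    using has_integral_const_real[of "1/(2*pi)" "-pi" pi] by (simp add: has_integral_Icc_iff_Ioo)
  ultimately show "((\<lambda>u. s * (1 + (tan (u/2))\<^sup>2) / 2 * cauchy_pdf l s (l + s * tan (u/2))) has_integral 1) {-pi<..<pi}"
    by (simp only:)
qed

lemma integrable_cauchy_pdf: "s > 0 \<Longrightarrow> integrable lborel (cauchy_pdf l s)"
  using has_integral_nonneg_lborel(1) has_integral_cauchy_pdf cauchy_pdf_pos
  by (metis borel_measurable_cauchy_pdf less_imp_le)

definition cauchy_geomix :: "real \<Rightarrow> real \<Rightarrow> real \<Rightarrow> real \<Rightarrow> real \<Rightarrow> real \<Rightarrow> real" where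
  "cauchy_geomix \<alpha> l1 s1 l2 s2 x = cauchy_pdf l1 s1 x powr \<alpha> * cauchy_pdf l2 s2 x powr (1 - \<alpha>)"

lemma rho_cauchy_eq_integral_geomix:
  "rho_cauchy \<alpha> l1 s1 l2 s2 = integral\<^sup>L lborel (cauchy_geomix \<alpha> l1 s1 l2 s2)"
  unfolding rho_cauchy_def cauchy_geomix_def ..

lemma borel_measurable_cauchy_geomix [measurable]:
  "cauchy_geomix \<alpha> l1 s1 l2 s2 \<in> borel_measurable borel"
  unfolding cauchy_geomix_def by measurable

lemma cauchy_geomix_pos: "s1 > 0 \<Longrightarrow> s2 > 0 \<Longrightarrow> cauchy_geomix \<alpha> l1 s1 l2 s2 x > 0"
  unfolding cauchy_geomix_def using cauchy_pdf_pos[of s1 l1 x] cauchy_pdf_pos[of s2 l2 x] by simp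

lemma integrable_cauchy_geomix:
  assumes "s1 > 0" and "s2 > 0" and "\<alpha> \<in> {0..1}"
  shows "integrable lborel (cauchy_geomix \<alpha> l1 s1 l2 s2)"
proof (rule Bochner_Integration.integrable_bound)
  show "integrable lborel (\<lambda>x. \<alpha> * cauchy_pdf l1 s1 x + (1 - \<alpha>) * cauchy_pdf l2 s2 x)"
    using assms integrable_cauchy_pdf by auto
  show "AE x in lborel. norm (cauchy_geomix \<alpha> l1 s1 l2 s2 x)
          \<le> norm (\<alpha> * cauchy_pdf l1 s1 x + (1 - \<alpha>) * cauchy_pdf l2 s2 x)"
  proof (rule AE_I2)
    fix x
    have "cauchy_pdf l1 s1 x > 0" "cauchy_pdf l2 s2 x > 0"
      using assms cauchy_pdf_pos by auto
    then show "norm (cauchy_geomix \<alpha> l1 s1 l2 s2 x)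
        \<le> norm (\<alpha> * cauchy_pdf l1 s1 x + (1 - \<alpha>) * cauchy_pdf l2 s2 x)"
      using assms(3) Youngs_inequality_0[of \<alpha> "1 - \<alpha>" "cauchy_pdf l1 s1 x" "cauchy_pdf l2 s2 x"]
      by (simp add: cauchy_geomix_def)
  qed
qed simp

lemma scale_weighted_geometric_mean:
  fixes a b c :: real
  assumes "c \<ge> 0" and "a \<ge> 0" and "b \<ge> 0"
  shows "c * (a powr \<alpha> * b powr (1 - \<alpha>)) = (c * a) powr \<alpha> * (c * b) powr (1 - \<alpha>)"
proof -
  have "c powr \<alpha> * c powr (1 - \<alpha>) = c"
    using assms(1) by (simp flip: powr_add)
  then show ?thesis using assms by (simp add: powr_mult algebra_simps)
qed

lemma rho_cauchy_translate: "rho_cauchy \<alpha> (l1 - a) s1 (l2 - a) s2 = rho_cauchy \<alpha> l1 s1 l2 s2"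
  using lborel_integral_real_affine[of 1 "\<lambda>x. cauchy_pdf l1 s1 x powr \<alpha> * cauchy_pdf l2 s2 x powr (1 - \<alpha>)" a]
  unfolding rho_cauchy_def by (simp add: cauchy_pdf_translate)

lemma rho_cauchy_reflect: "rho_cauchy \<alpha> (- l1) s1 (- l2) s2 = rho_cauchy \<alpha> l1 s1 l2 s2"
  using lborel_integral_real_affine[of "-1" "\<lambda>x. cauchy_pdf l1 s1 x powr \<alpha> * cauchy_pdf l2 s2 x powr (1 - \<alpha>)" 0]
  unfolding rho_cauchy_def by (simp add: cauchy_pdf_reflect)

lemma rho_cauchy_swap: "rho_cauchy \<alpha> l1 s1 l2 s2 = rho_cauchy (1 - \<alpha>) l2 s2 l1 s1"
  unfolding rho_cauchy_def by (simp add: mult.commute)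

lemma rho_cauchy_reciprocal:
  assumes "s1 > 0" and "s2 > 0" and "\<alpha> \<in> {0..1}"
  shows "rho_cauchy \<alpha> (-l1/(l1\<^sup>2+s1\<^sup>2)) (s1/(l1\<^sup>2+s1\<^sup>2)) (-l2/(l2\<^sup>2+s2\<^sup>2)) (s2/(l2\<^sup>2+s2\<^sup>2))
         = rho_cauchy \<alpha> l1 s1 l2 s2"
proof -
  let ?F = "cauchy_geomix \<alpha> l1 s1 l2 s2"
  let ?G = "cauchy_geomix \<alpha> (-l1/(l1\<^sup>2+s1\<^sup>2)) (s1/(l1\<^sup>2+s1\<^sup>2)) (-l2/(l2\<^sup>2+s2\<^sup>2)) (s2/(l2\<^sup>2+s2\<^sup>2))"
  have "l1\<^sup>2 + s1\<^sup>2 > 0" "l2\<^sup>2 + s2\<^sup>2 > 0" using assms by (simp_all add: add_nonneg_pos)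
  then have G: "(?G has_integral integral\<^sup>L lborel ?G) UNIV"
    using assms by (intro has_integral_integral_lborel integrable_cauchy_geomix) auto
  have pointwise: "?F (-1/y) / y\<^sup>2 = ?G y" if "y \<noteq> 0" for y
    using scale_weighted_geometric_mean[of "1/y\<^sup>2" "cauchy_pdf l1 s1 (-1/y)" "cauchy_pdf l2 s2 (-1/y)" \<alpha>]
      cauchy_pdf_pos[OF assms(1), of l1 "-1/y"] cauchy_pdf_pos[OF assms(2), of l2 "-1/y"]
      cauchy_pdf_reciprocal[OF assms(1) that, of l1] cauchy_pdf_reciprocal[OF assms(2) that, of l2]
    by (simp add: cauchy_geomix_def)
  have "((\<lambda>y. ?F (-1/y) / y\<^sup>2) has_integral integral\<^sup>L lborel ?G) UNIV"
  proof (rule has_integral_spike_finite[of "{0}", OF _ _ G])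
    show "?F (-1/y) / y\<^sup>2 = ?G y" if "y \<in> UNIV - {0}" for y
      using that by (intro pointwise) simp
  qed simp
  then have "(?F has_integral integral\<^sup>L lborel ?G) UNIV"
    by (rule has_integral_reciprocal_substitution[rotated])
      (use cauchy_geomix_pos[OF assms(1,2)] in \<open>simp add: less_imp_le\<close>)
  moreover have "(?F has_integral integral\<^sup>L lborel ?F) UNIV"
    using assms by (intro has_integral_integral_lborel integrable_cauchy_geomix)
  ultimately show ?thesis
    unfolding rho_cauchy_eq_integral_geomix using has_integral_unique by blast
qed

section \<open>Reduction to a centred pair\<close>

definition cauchy_ellip_param :: "real \<Rightarrow> real \<Rightarrow> real \<Rightarrow> real \<Rightarrow> real" where
  "cauchy_ellip_param l1 s1 l2 s2 = ((s1 - s2)\<^sup>2 + (l1 - l2)\<^sup>2) / ((s1 + s2)\<^sup>2 + (l1 - l2)\<^sup>2)"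

lemma cauchy_ellip_param_bounds:
  assumes "s1 > 0" and "s2 > 0"
  shows "0 \<le> cauchy_ellip_param l1 s1 l2 s2" and "cauchy_ellip_param l1 s1 l2 s2 < 1"
proof -
  have "(s1 - s2)\<^sup>2 < (s1 + s2)\<^sup>2" using assms by (simp add: power2_eq_square algebra_simps)
  moreover have "0 < (s1 + s2)\<^sup>2 + (l1 - l2)\<^sup>2" using assms by (simp add: add_pos_nonneg)
  ultimately show "0 \<le> cauchy_ellip_param l1 s1 l2 s2" "cauchy_ellip_param l1 s1 l2 s2 < 1"
    unfolding cauchy_ellip_param_def by simp_all
qed

lemma cauchy_ellip_param_translate:
  "cauchy_ellip_param (l1 - a) s1 (l2 - a) s2 = cauchy_ellip_param l1 s1 l2 s2"
  unfolding cauchy_ellip_param_def by simp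

(* With t = s2 and t = -s2 this gives the denominator and the numerator of cauchy_ellip_param
   for the inverted parameters. *)
lemma reciprocal_params_sq_dist:
  fixes t :: real
  assumes t: "t\<^sup>2 = s2\<^sup>2" and r1: "r1 = l1\<^sup>2 + s1\<^sup>2" and r2: "r2 = l2\<^sup>2 + s2\<^sup>2"
    and "r1 > 0" and "r2 > 0"
  shows "(s1/r1 + t/r2)\<^sup>2 + (-l1/r1 - -l2/r2)\<^sup>2 = ((s1 + t)\<^sup>2 + (l1 - l2)\<^sup>2) / (r1 * r2)"
proof -
  have "(s1 * r2 + t * r1)\<^sup>2 + (l2 * r1 - l1 * r2)\<^sup>2
      = (l1\<^sup>2 + s1\<^sup>2) * r2\<^sup>2 + (l2\<^sup>2 + t\<^sup>2) * r1\<^sup>2 + 2 * r1 * r2 * (s1 * t - l1 * l2)"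
    by (simp add: power2_eq_square algebra_simps)
  also have "\<dots> = r1 * r2 * (r1 + r2 + 2 * (s1 * t - l1 * l2))"
    unfolding t r1[symmetric] r2[symmetric] by (simp add: power2_eq_square algebra_simps)
  also have "r1 + r2 + 2 * (s1 * t - l1 * l2) = (s1 + t)\<^sup>2 + (l1 - l2)\<^sup>2"
    unfolding r1 r2 power2_sum power2_diff t by (simp add: algebra_simps)
  finally have numerator: "(s1 * r2 + t * r1)\<^sup>2 + (l2 * r1 - l1 * r2)\<^sup>2 = r1 * r2 * ((s1 + t)\<^sup>2 + (l1 - l2)\<^sup>2)" .
  have "(s1/r1 + t/r2)\<^sup>2 + (-l1/r1 - -l2/r2)\<^sup>2
      = ((s1 * r2 + t * r1)\<^sup>2 + (l2 * r1 - l1 * r2)\<^sup>2) / (r1 * r2)\<^sup>2"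
    using \<open>r1 > 0\<close> \<open>r2 > 0\<close> by (simp add: field_simps power2_eq_square)
  then show ?thesis unfolding numerator by (simp add: power2_eq_square)
qed

lemma cauchy_ellip_param_reciprocal:
  assumes "s1 > 0" and "s2 > 0"
  shows "cauchy_ellip_param (-l1/(l1\<^sup>2+s1\<^sup>2)) (s1/(l1\<^sup>2+s1\<^sup>2)) (-l2/(l2\<^sup>2+s2\<^sup>2)) (s2/(l2\<^sup>2+s2\<^sup>2))
         = cauchy_ellip_param l1 s1 l2 s2"
proof -
  define r1 where "r1 = l1\<^sup>2 + s1\<^sup>2"
  define r2 where "r2 = l2\<^sup>2 + s2\<^sup>2"
  have r: "r1 > 0" "r2 > 0" unfolding r1_def r2_def using assms by (simp_all add: add_nonneg_pos)
  have "0 < (s1 + s2)\<^sup>2 + (l1 - l2)\<^sup>2" using assms by (simp add: add_pos_nonneg)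
  then show ?thesis
    using reciprocal_params_sq_dist[OF _ r1_def r2_def r, of s2] reciprocal_params_sq_dist[OF _ r1_def r2_def r, of "-s2"] r
    unfolding cauchy_ellip_param_def r1_def[symmetric] r2_def[symmetric] by simp
qed

lemma ex_shift_equal_reciprocal_scales:
  fixes l1 l2 s1 s2 :: real
  assumes "s1 > 0" and "s2 > 0"
  shows "\<exists>a. s1 / ((l1 - a)\<^sup>2 + s1\<^sup>2) = s2 / ((l2 - a)\<^sup>2 + s2\<^sup>2)"
proof -
  have "\<exists>a. s1 * ((l2 - a)\<^sup>2 + s2\<^sup>2) = s2 * ((l1 - a)\<^sup>2 + s1\<^sup>2)"
  proof (cases "s1 = s2")
    case True
    then show ?thesis by (intro exI[of _ "(l1 + l2) / 2"]) (simp add: power2_eq_square algebra_simps)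
  next
    case False
    define A where "A = s1 - s2"
    define B where "B = s1 * l2 - s2 * l1"
    define C where "C = s1 * l2\<^sup>2 - s2 * l1\<^sup>2 + s1 * s2 * (s2 - s1)"
    have "B\<^sup>2 - A * C = s1 * s2 * ((l1 - l2)\<^sup>2 + (s1 - s2)\<^sup>2)"
      unfolding A_def B_def C_def by (simp add: power2_eq_square algebra_simps)
    then have disc: "B\<^sup>2 - A * C \<ge> 0" using assms by simp
    define d where "d = sqrt (B\<^sup>2 - A * C)"
    define a where "a = (B + d) / A"
    have "A \<noteq> 0" using False by (simp add: A_def)
    have "s1 * ((l2 - a)\<^sup>2 + s2\<^sup>2) - s2 * ((l1 - a)\<^sup>2 + s1\<^sup>2) = A * a\<^sup>2 - 2 * B * a + C"
      unfolding A_def B_def C_def by (simp add: power2_eq_square algebra_simps)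
    also have "\<dots> = (d\<^sup>2 - (B\<^sup>2 - A * C)) / A"
      using \<open>A \<noteq> 0\<close> unfolding a_def by (simp add: field_simps power2_eq_square)
    also have "\<dots> = 0" using disc by (simp add: d_def)
    finally show ?thesis by auto
  qed
  then obtain a where "s1 * ((l2 - a)\<^sup>2 + s2\<^sup>2) = s2 * ((l1 - a)\<^sup>2 + s1\<^sup>2)" by blast
  moreover have "(l1 - a)\<^sup>2 + s1\<^sup>2 \<noteq> 0" "(l2 - a)\<^sup>2 + s2\<^sup>2 \<noteq> 0"
    using assms by (simp_all add: add_nonneg_pos)
  ultimately show ?thesis by (intro exI[of _ a]) (subst frac_eq_eq; assumption)
qed

lemma cauchy_reduce_to_centered:
  fixes l1 l2 s1 s2 :: real
  assumes "s1 > 0" and "s2 > 0"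
  obtains l s where "s > 0"
    and "\<And>\<alpha>. \<alpha> \<in> {0..1} \<Longrightarrow> rho_cauchy \<alpha> l1 s1 l2 s2 = rho_cauchy \<alpha> (-l) s l s"
    and "cauchy_ellip_param l1 s1 l2 s2 = cauchy_ellip_param (-l) s l s"
proof -
  obtain a where a: "s1 / ((l1 - a)\<^sup>2 + s1\<^sup>2) = s2 / ((l2 - a)\<^sup>2 + s2\<^sup>2)"
    using ex_shift_equal_reciprocal_scales[OF assms] by blast
  define L1 L2 where "L1 = l1 - a" and "L2 = l2 - a"
  define s where "s = s1 / (L1\<^sup>2 + s1\<^sup>2)"
  define M1 M2 where "M1 = -L1 / (L1\<^sup>2 + s1\<^sup>2)" and "M2 = -L2 / (L2\<^sup>2 + s2\<^sup>2)"
  define c l where "c = (M1 + M2) / 2" and "l = (M2 - M1) / 2"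
  have s2: "s2 / (L2\<^sup>2 + s2\<^sup>2) = s" using a by (simp add: s_def L1_def L2_def)
  have M: "M1 - c = -l" "M2 - c = l" by (simp_all add: c_def l_def field_simps)
  show ?thesis
  proof
    show "s > 0" using assms by (simp add: s_def add_nonneg_pos)
    show "rho_cauchy \<alpha> l1 s1 l2 s2 = rho_cauchy \<alpha> (-l) s l s" if "\<alpha> \<in> {0..1}" for \<alpha>
    proof -
      have "rho_cauchy \<alpha> l1 s1 l2 s2 = rho_cauchy \<alpha> L1 s1 L2 s2"
        unfolding L1_def L2_def by (rule rho_cauchy_translate[symmetric])
      also have "\<dots> = rho_cauchy \<alpha> M1 s M2 s"
        using rho_cauchy_reciprocal[OF assms that, of L1 L2] by (simp add: M1_def M2_def s_def s2)
      also have "\<dots> = rho_cauchy \<alpha> (-l) s l s"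
        using rho_cauchy_translate[of \<alpha> M1 c s M2 s] by (simp add: M)
      finally show ?thesis .
    qed
    have "cauchy_ellip_param l1 s1 l2 s2 = cauchy_ellip_param L1 s1 L2 s2"
      unfolding L1_def L2_def by (rule cauchy_ellip_param_translate[symmetric])
    also have "\<dots> = cauchy_ellip_param M1 s M2 s"
      using cauchy_ellip_param_reciprocal[OF assms, of L1 L2] by (simp add: M1_def M2_def s_def s2)
    also have "\<dots> = cauchy_ellip_param (-l) s l s"
      using cauchy_ellip_param_translate[of M1 c s M2 s] by (simp add: M)
    finally show "cauchy_ellip_param l1 s1 l2 s2 = cauchy_ellip_param (-l) s l s" .
  qed
qed

section \<open>The Bhattacharyya coefficient\<close>

lemma cauchy_geomix_half:
  assumes "s1 > 0" and "s2 > 0"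
  shows "cauchy_geomix (1/2) l1 s1 l2 s2 x = sqrt (cauchy_pdf l1 s1 x * cauchy_pdf l2 s2 x)"
  using cauchy_pdf_pos[OF assms(1)] cauchy_pdf_pos[OF assms(2)]
  by (simp add: cauchy_geomix_def powr_half_sqrt real_sqrt_mult less_imp_le)

lemma rho_cauchy_half_eq_integral_sqrt:
  assumes "s1 > 0" and "s2 > 0"
  shows "rho_cauchy (1/2) l1 s1 l2 s2 = (LINT x|lborel. sqrt (cauchy_pdf l1 s1 x * cauchy_pdf l2 s2 x))"
  unfolding rho_cauchy_eq_integral_geomix cauchy_geomix_half[OF assms, symmetric] ..

lemma tan_half_quadratic:
  fixes R l s u :: real
  assumes "R\<^sup>2 = l\<^sup>2 + s\<^sup>2"
  shows "s\<^sup>2 + (R * tan (u/2) - l)\<^sup>2 = R * (1 + (tan (u/2))\<^sup>2) * (R - l * sin u)"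
proof -
  define t where "t = tan (u/2)"
  have "1 + t\<^sup>2 \<noteq> 0" by (simp add: add_pos_nonneg less_imp_neq[symmetric])
  then have sin_u: "(1 + t\<^sup>2) * sin u = 2 * t"
    using sin_tan_half[of "u/2"] by (simp add: t_def)
  have "R * (1 + t\<^sup>2) * (R - l * sin u) = R\<^sup>2 * (1 + t\<^sup>2) - R * l * ((1 + t\<^sup>2) * sin u)"
    by (simp add: power2_eq_square algebra_simps)
  also have "\<dots> = R\<^sup>2 * (1 + t\<^sup>2) - 2 * R * l * t"
    unfolding sin_u by simp
  also have "\<dots> = s\<^sup>2 + (R * t - l)\<^sup>2"
    unfolding power2_diff power_mult_distrib assms by (simp add: algebra_simps)
  finally show ?thesis by (simp add: t_def)
qed

lemma cauchy_centered_product_tan_half: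
  fixes R l s u :: real
  assumes "R\<^sup>2 = l\<^sup>2 + s\<^sup>2" and "R > 0"
  shows "(s\<^sup>2 + (R * tan (u/2) - -l)\<^sup>2) * (s\<^sup>2 + (R * tan (u/2) - l)\<^sup>2)
           = (R\<^sup>2 * (1 + (tan (u/2))\<^sup>2))\<^sup>2 * (1 - l\<^sup>2 / R\<^sup>2 * (sin u)\<^sup>2)"
proof -
  have "R\<^sup>2 = (-l)\<^sup>2 + s\<^sup>2" using assms(1) by simp
  then have "(s\<^sup>2 + (R * tan (u/2) - -l)\<^sup>2) * (s\<^sup>2 + (R * tan (u/2) - l)\<^sup>2)
      = (R * (1 + (tan (u/2))\<^sup>2) * (R - -l * sin u)) * (R * (1 + (tan (u/2))\<^sup>2) * (R - l * sin u))"
    by (simp only: tan_half_quadratic assms(1))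
  also have "\<dots> = (R * (1 + (tan (u/2))\<^sup>2))\<^sup>2 * (R\<^sup>2 - l\<^sup>2 * (sin u)\<^sup>2)"
    by (simp add: power2_eq_square algebra_simps)
  also have "\<dots> = (R\<^sup>2 * (1 + (tan (u/2))\<^sup>2))\<^sup>2 * (1 - l\<^sup>2 / R\<^sup>2 * (sin u)\<^sup>2)"
    using assms(2) by (simp add: power2_eq_square field_simps)
  finally show ?thesis .
qed

lemma cauchy_centered_sqrt_tan_half:
  fixes R l s u :: real
  assumes "s > 0" and "R > 0" and R2: "R\<^sup>2 = l\<^sup>2 + s\<^sup>2"
  shows "R * (1 + (tan (u/2))\<^sup>2) / 2 * sqrt (cauchy_pdf (-l) s (R * tan (u/2)) * cauchy_pdf l s (R * tan (u/2)))
           = s / (2*pi*R) * ellipK_integrand (l\<^sup>2 / R\<^sup>2) u"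
proof -
  define m where "m = l\<^sup>2 / R\<^sup>2"
  define T where "T = 1 + (tan (u/2))\<^sup>2"
  define W where "W = sqrt (1 - m * (sin u)\<^sup>2)"
  have "m < 1" using assms unfolding m_def R2 by (simp add: add_nonneg_pos)
  then have "W > 0" unfolding W_def using ellipK_radicand_pos by simp
  have "T > 0" by (simp add: T_def add_pos_nonneg)
  have "cauchy_pdf (-l) s (R * tan (u/2)) * cauchy_pdf l s (R * tan (u/2))
      = s\<^sup>2 / (pi\<^sup>2 * ((s\<^sup>2 + (R * tan (u/2) - -l)\<^sup>2) * (s\<^sup>2 + (R * tan (u/2) - l)\<^sup>2)))"
    unfolding cauchy_pdf_def by (simp add: power2_eq_square mult_ac)
  also have "\<dots> = (s / (pi * (R\<^sup>2 * T)))\<^sup>2 / (1 - m * (sin u)\<^sup>2)"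
    unfolding cauchy_centered_product_tan_half[OF R2 \<open>R > 0\<close>] T_def[symmetric] m_def[symmetric]
    by (simp add: power_divide power_mult_distrib mult.assoc)
  finally have "sqrt (cauchy_pdf (-l) s (R * tan (u/2)) * cauchy_pdf l s (R * tan (u/2)))
      = s / (pi * (R\<^sup>2 * T)) / W"
    using \<open>R > 0\<close> \<open>T > 0\<close> \<open>s > 0\<close> by (simp add: W_def real_sqrt_divide)
  moreover have "R * T / 2 * (s / (pi * (R\<^sup>2 * T)) / W) = s / (2*pi*R) * (1 / W)"
    using \<open>R > 0\<close> \<open>T > 0\<close> \<open>W > 0\<close> by (simp add: field_simps power2_eq_square)
  ultimately show ?thesis unfolding ellipK_integrand_def T_def W_def m_def by simp
qed

lemma rho_cauchy_half_centered:
  assumes "s > 0"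
  shows "rho_cauchy (1/2) (-l) s l s
           = 2/pi * sqrt (1 - cauchy_ellip_param (-l) s l s) * ellipK (cauchy_ellip_param (-l) s l s)"
proof -
  define R where "R = sqrt (l\<^sup>2 + s\<^sup>2)"
  define m where "m = l\<^sup>2 / R\<^sup>2"
  have "l\<^sup>2 + s\<^sup>2 > 0" using assms by (simp add: add_nonneg_pos)
  then have "R > 0" and R2: "R\<^sup>2 = l\<^sup>2 + s\<^sup>2" by (simp_all add: R_def)
  have "(s - s)\<^sup>2 + (-l - l)\<^sup>2 = 4 * l\<^sup>2" and "(s + s)\<^sup>2 + (-l - l)\<^sup>2 = 4 * (l\<^sup>2 + s\<^sup>2)"
    by (simp_all add: power2_eq_square algebra_simps)
  then have param: "cauchy_ellip_param (-l) s l s = m"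
    unfolding cauchy_ellip_param_def m_def R2 by (simp only: mult_divide_mult_cancel_left_if) simp
  have "1 - m = (s / R)\<^sup>2"
    using assms unfolding m_def power_divide R2 by (simp add: field_split_simps)
  moreover have "(s / R)\<^sup>2 > 0" using \<open>R > 0\<close> assms by simp
  ultimately have "m < 1" and "sqrt (1 - m) = s / R"
    using \<open>R > 0\<close> assms by (linarith, simp)
  define f where "f x = sqrt (cauchy_pdf (-l) s x * cauchy_pdf l s x)" for x
  have "((\<lambda>u. s / (2*pi*R) * ellipK_integrand m u) has_integral s / (2*pi*R) * (4 * ellipK m)) {-pi..pi}"
    by (rule has_integral_mult_right[OF has_integral_ellipK_full_period[OF \<open>m < 1\<close>]])
  then have "((\<lambda>u. R * (1 + (tan (u/2))\<^sup>2) / 2 * f (0 + R * tan (u/2)))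
      has_integral s / (2*pi*R) * (4 * ellipK m)) {-pi<..<pi}"
    using cauchy_centered_sqrt_tan_half[OF assms \<open>R > 0\<close> R2]
    by (simp only: has_integral_Icc_iff_Ioo f_def m_def add_0)
  moreover have nonneg: "0 \<le> f x" for x
    using cauchy_pdf_pos[OF assms] by (simp add: f_def less_imp_le)
  ultimately have "(f has_integral s / (2*pi*R) * (4 * ellipK m)) UNIV"
    using has_integral_tan_substitution[OF \<open>R > 0\<close>] by blast
  moreover have "f \<in> borel_measurable borel" unfolding f_def by measurable
  ultimately have "integral\<^sup>L lborel f = s / (2*pi*R) * (4 * ellipK m)"
    using nonneg has_integral_nonneg_lborel(2) by blast
  then show ?thesis
    unfolding rho_cauchy_half_eq_integral_sqrt[OF assms assms] param \<open>sqrt (1 - m) = s / R\<close>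
    by (simp add: f_def[abs_def] mult_ac)
qed

lemma rho_cauchy_half_eq_ellipK:
  assumes "s1 > 0" and "s2 > 0"
  shows "rho_cauchy (1/2) l1 s1 l2 s2
           = 2/pi * sqrt (1 - cauchy_ellip_param l1 s1 l2 s2) * ellipK (cauchy_ellip_param l1 s1 l2 s2)"
proof -
  obtain l s where "s > 0"
    and "\<And>\<alpha>. \<alpha> \<in> {0..1} \<Longrightarrow> rho_cauchy \<alpha> l1 s1 l2 s2 = rho_cauchy \<alpha> (-l) s l s"
    and "cauchy_ellip_param l1 s1 l2 s2 = cauchy_ellip_param (-l) s l s"
    using cauchy_reduce_to_centered[OF assms] by blast
  then show ?thesis by (simp add: rho_cauchy_half_centered)
qed

lemma rho_cauchy_half_pos:
  assumes "s1 > 0" and "s2 > 0"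
  shows "rho_cauchy (1/2) l1 s1 l2 s2 > 0"
proof -
  note bounds = cauchy_ellip_param_bounds[OF assms, of l1 l2]
  have "ellipK (cauchy_ellip_param l1 s1 l2 s2) > 0"
    using ellipK_ge_pi_half[OF bounds] pi_gt_zero by linarith
  moreover have "sqrt (1 - cauchy_ellip_param l1 s1 l2 s2) > 0" using bounds(2) by simp
  ultimately show ?thesis by (simp add: rho_cauchy_half_eq_ellipK[OF assms])
qed

lemma one_minus_cauchy_ellip_param:
  assumes "s1 > 0" and "s2 > 0"
  shows "1 - cauchy_ellip_param l1 s1 l2 s2 = 4 * (s1 * s2) / ((s1 + s2)\<^sup>2 + (l1 - l2)\<^sup>2)"
proof -
  have "(s1 + s2)\<^sup>2 + (l1 - l2)\<^sup>2 > 0" using assms by (simp add: add_pos_nonneg)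
  then show ?thesis
    unfolding cauchy_ellip_param_def by (simp add: field_simps power2_eq_square)
qed

section \<open>Chernoff information\<close>

lemma rho_cauchy_one_minus:
  assumes "s1 > 0" and "s2 > 0" and "\<alpha> \<in> {0..1}"
  shows "rho_cauchy (1 - \<alpha>) l1 s1 l2 s2 = rho_cauchy \<alpha> l1 s1 l2 s2"
proof -
  obtain l s where "\<And>\<beta>. \<beta> \<in> {0..1} \<Longrightarrow> rho_cauchy \<beta> l1 s1 l2 s2 = rho_cauchy \<beta> (-l) s l s"
    using cauchy_reduce_to_centered[OF assms(1,2)] by blast
  moreover have "rho_cauchy (1 - \<alpha>) (-l) s l s = rho_cauchy \<alpha> (-l) s l s"
    using rho_cauchy_swap[of "1 - \<alpha>" "-l" s l s] rho_cauchy_reflect[of \<alpha> l s "-l" s] by simp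
  ultimately show ?thesis using assms(3) by simp
qed

lemma rho_cauchy_half_le:
  assumes "s1 > 0" and "s2 > 0" and "\<alpha> \<in> {0..1}"
  shows "rho_cauchy (1/2) l1 s1 l2 s2 \<le> rho_cauchy \<alpha> l1 s1 l2 s2"
proof -
  let ?A = "cauchy_geomix \<alpha> l1 s1 l2 s2" and ?B = "cauchy_geomix (1 - \<alpha>) l1 s1 l2 s2"
  have "1 - \<alpha> \<in> {0..1}" using assms(3) by auto
  have "cauchy_geomix (1/2) l1 s1 l2 s2 x \<le> (?A x + ?B x) / 2" for x
  proof -
    have powr_split: "p powr \<alpha> * p powr (1 - \<alpha>) = p" if "p > 0" for p :: real
      using that by (simp flip: powr_add)
    have "?A x * ?B x = (cauchy_pdf l1 s1 x powr \<alpha> * cauchy_pdf l1 s1 x powr (1 - \<alpha>))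
                       * (cauchy_pdf l2 s2 x powr \<alpha> * cauchy_pdf l2 s2 x powr (1 - \<alpha>))"
      by (simp add: cauchy_geomix_def mult_ac)
    also have "\<dots> = cauchy_pdf l1 s1 x * cauchy_pdf l2 s2 x"
      using cauchy_pdf_pos assms(1,2) by (simp add: powr_split)
    finally have "?A x * ?B x = cauchy_pdf l1 s1 x * cauchy_pdf l2 s2 x" .
    then show ?thesis
      using arith_geo_mean_sqrt[of "?A x" "?B x"] cauchy_geomix_pos[OF assms(1,2)]
      by (simp add: cauchy_geomix_half[OF assms(1,2)] less_imp_le)
  qed
  then have "rho_cauchy (1/2) l1 s1 l2 s2 \<le> (LINT x|lborel. (?A x + ?B x) / 2)"
    unfolding rho_cauchy_eq_integral_geomix
    using integrable_cauchy_geomix[OF assms(1,2)] assms(3) \<open>1 - \<alpha> \<in> {0..1}\<close>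
    by (intro integral_mono) auto
  also have "\<dots> = (rho_cauchy \<alpha> l1 s1 l2 s2 + rho_cauchy (1 - \<alpha>) l1 s1 l2 s2) / 2"
    using integrable_cauchy_geomix[OF assms(1,2)] assms(3) \<open>1 - \<alpha> \<in> {0..1}\<close>
    by (simp add: rho_cauchy_eq_integral_geomix)
  finally show ?thesis using rho_cauchy_one_minus[OF assms] by simp
qed

lemma DC_cauchy_eq_DB_half:
  assumes "s1 > 0" and "s2 > 0"
  shows "DC_cauchy l1 s1 l2 s2 = DB_cauchy (1/2) l1 s1 l2 s2"
  unfolding DC_cauchy_def
proof (rule cSup_eq_maximum)
  show "DB_cauchy (1/2) l1 s1 l2 s2 \<in> (\<lambda>\<alpha>. DB_cauchy \<alpha> l1 s1 l2 s2) ` {0..1}" by auto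
  show "y \<le> DB_cauchy (1/2) l1 s1 l2 s2"
    if y_in: "y \<in> (\<lambda>\<alpha>. DB_cauchy \<alpha> l1 s1 l2 s2) ` {0..1}" for y
  proof -
    obtain \<alpha> where "\<alpha> \<in> {0..1}" and y: "y = DB_cauchy \<alpha> l1 s1 l2 s2" using y_in by blast
    from \<open>\<alpha> \<in> {0..1}\<close> have "rho_cauchy (1/2) l1 s1 l2 s2 \<le> rho_cauchy \<alpha> l1 s1 l2 s2"
      by (rule rho_cauchy_half_le[OF assms])
    then show ?thesis
      using rho_cauchy_half_pos[OF assms, of l1 l2] by (simp add: y DB_cauchy_def)
  qed
qed

theorem propositionA4:
  fixes l1 s1 l2 s2 :: real
  assumes "s1 > 0" and "s2 > 0"
  defines "\<delta> \<equiv> l1 - l2"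
  shows "rho_cauchy (1/2) l1 s1 l2 s2
           = (LINT x|lborel. sqrt (cauchy_pdf l1 s1 x * cauchy_pdf l2 s2 x))
       \<and> (LINT x|lborel. sqrt (cauchy_pdf l1 s1 x * cauchy_pdf l2 s2 x))
           = 4 * sqrt (s1 * s2) / (pi * sqrt ((s1 + s2)\<^sup>2 + \<delta>\<^sup>2))
             * ellipK (((s1 - s2)\<^sup>2 + \<delta>\<^sup>2) / ((s1 + s2)\<^sup>2 + \<delta>\<^sup>2))
       \<and> DC_cauchy l1 s1 l2 s2 = DB_cauchy (1/2) l1 s1 l2 s2
       \<and> DB_cauchy (1/2) l1 s1 l2 s2 = - ln (rho_cauchy (1/2) l1 s1 l2 s2)"
proof (intro conjI)
  show sqrt_form: "rho_cauchy (1/2) l1 s1 l2 s2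
      = (LINT x|lborel. sqrt (cauchy_pdf l1 s1 x * cauchy_pdf l2 s2 x))"
    by (rule rho_cauchy_half_eq_integral_sqrt[OF assms(1,2)])
  have "2/pi * sqrt (1 - cauchy_ellip_param l1 s1 l2 s2)
      = 4 * sqrt (s1 * s2) / (pi * sqrt ((s1 + s2)\<^sup>2 + \<delta>\<^sup>2))"
    unfolding one_minus_cauchy_ellip_param[OF assms(1,2)] \<delta>_def
    by (simp add: real_sqrt_divide real_sqrt_mult)
  then show "(LINT x|lborel. sqrt (cauchy_pdf l1 s1 x * cauchy_pdf l2 s2 x))
      = 4 * sqrt (s1 * s2) / (pi * sqrt ((s1 + s2)\<^sup>2 + \<delta>\<^sup>2))
        * ellipK (((s1 - s2)\<^sup>2 + \<delta>\<^sup>2) / ((s1 + s2)\<^sup>2 + \<delta>\<^sup>2))"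
    unfolding sqrt_form[symmetric] rho_cauchy_half_eq_ellipK[OF assms(1,2)]
    by (simp add: cauchy_ellip_param_def \<delta>_def)
  show "DC_cauchy l1 s1 l2 s2 = DB_cauchy (1/2) l1 s1 l2 s2"
    by (rule DC_cauchy_eq_DB_half[OF assms(1,2)])
  show "DB_cauchy (1/2) l1 s1 l2 s2 = - ln (rho_cauchy (1/2) l1 s1 l2 s2)"
    unfolding DB_cauchy_def ..
qed

end
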